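(* Let $\boldsymbol{\omega}\in\mathbb{R}^d$ satisfy $|\boldsymbol{\omega}\cdot\boldsymbol{\nu}|>\gamma_0|\boldsymbol{\nu}|^{-\tau}$ for all $\boldsymbol{\nu}\in\mathbb{Z}^d\setminus\{\boldsymbol{0}\}$, with $\gamma_0>0$, $\tau>d-1$, and let $\gamma$ be a constant with $0<\gamma<\min\big\{|\omega_1|,\ldots,|\omega_d|,\ \min_{1\le i<j\le d}\big||\omega_i|-|\omega_j|\big|\big\}$. Let $p\ge2$, $\boldsymbol{\nu}_1,\ldots,\boldsymbol{\nu}_p\in\mathbb{Z}^d$ and $j_1,\ldots,j_p\in\{1,\ldots,d\}$ be such that $|\boldsymbol{\nu}_i-\boldsymbol{\nu}_{i-1}|\le2$ and $\delta_{j_i}(\boldsymbol{\omega}\cdot\boldsymbol{\nu}_i)=\delta_{j_1}(\boldsymbol{\omega}\cdot\boldsymbol{\nu}_1)\le\gamma$ for $i=2,\ldots,p$. Then $|\boldsymbol{\nu}_1-\boldsymbol{\nu}_p|\le2$.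
   Context: $|\boldsymbol{\nu}|=|\nu_1|+\cdots+|\nu_d|$; $\boldsymbol{e}_j$ is the $j$-th standard basis vector. For $j\in\{1,\ldots,d\}$ and $\boldsymbol{\nu}\in\mathbb{Z}^d$, $\delta_j(\boldsymbol{\omega}\cdot\boldsymbol{\nu}):=\min\{|\boldsymbol{\omega}\cdot\boldsymbol{\nu}-\omega_j|,|\boldsymbol{\omega}\cdot\boldsymbol{\nu}+\omega_j|\}$. *)

theory Defs
  imports Complex_Main
begin

text \<open>Vectors in R^d / Z^d are functions on indices, only components 1..d matter.\<close>

definition dotp :: "nat \<Rightarrow> (nat \<Rightarrow> real) \<Rightarrow> (nat \<Rightarrow> int) \<Rightarrow> real" where
  "dotp d \<omega> \<nu> = (\<Sum>k=1..d. \<omega> k * of_int (\<nu> k))"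

definition norm1 :: "nat \<Rightarrow> (nat \<Rightarrow> int) \<Rightarrow> int" where
  "norm1 d \<nu> = (\<Sum>k=1..d. \<bar>\<nu> k\<bar>)"

definition delta :: "(nat \<Rightarrow> real) \<Rightarrow> nat \<Rightarrow> real \<Rightarrow> real" where
  "delta \<omega> j x = min \<bar>x - \<omega> j\<bar> \<bar>x + \<omega> j\<bar>"

end

theory Submission
  imports Defs
begin

text \<open>Shift each \<open>\<nu>\<^sub>i\<close> by the signed unit vector \<open>s\<^sub>i e\<^sub>j\<^sub>i\<close> nearest to it, so that
  \<open>w\<^sub>i = \<nu>\<^sub>i - s\<^sub>i e\<^sub>j\<^sub>i\<close> has \<open>|\<omega>\<cdot>w\<^sub>i| = \<delta>\<close>. If \<open>\<omega>\<cdot>w\<close> changed sign between consecutive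
  indices, nonresonance (a consequence of the Diophantine condition) would force \<open>w\<^sub>i\<^sub>+\<^sub>1 = -w\<^sub>i\<close>,
  hence \<open>|w\<^sub>i| \<le> 2\<close>; but the gap condition on \<open>\<gamma>\<close> makes \<open>|\<omega>\<cdot>w| > \<gamma> \<ge> \<delta>\<close> for every nonzero
  \<open>w\<close> with \<open>|w| \<le> 2\<close>. So \<open>\<omega>\<cdot>w\<^sub>i\<close> is constant, nonresonance gives \<open>w\<^sub>1 = w\<^sub>p\<close>, and
  \<open>\<nu>\<^sub>1 - \<nu>\<^sub>p = s\<^sub>1 e\<^sub>j\<^sub>1 - s\<^sub>p e\<^sub>j\<^sub>p\<close> has norm at most 2.\<close>

definition unit_vec :: "nat \<Rightarrow> int \<Rightarrow> nat \<Rightarrow> int" where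
  "unit_vec j s = (\<lambda>k. if k = j then s else 0)"

definition nonresonant :: "nat \<Rightarrow> (nat \<Rightarrow> real) \<Rightarrow> bool" where
  "nonresonant d \<omega> \<longleftrightarrow> (\<forall>\<mu>. dotp d \<omega> \<mu> = 0 \<longrightarrow> (\<forall>k\<in>{1..d}. \<mu> k = 0))"

lemma dotp_diff: "dotp d \<omega> (\<lambda>k. u k - v k) = dotp d \<omega> u - dotp d \<omega> v"
  unfolding dotp_def by (simp add: sum_subtractf right_diff_distrib)

lemma dotp_add: "dotp d \<omega> (\<lambda>k. u k + v k) = dotp d \<omega> u + dotp d \<omega> v"
  unfolding dotp_def by (simp add: sum.distrib distrib_left)

lemma dotp_unit_vec: "j \<in> {1..d} \<Longrightarrow> dotp d \<omega> (unit_vec j s) = \<omega> j * of_int s"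
  unfolding dotp_def unit_vec_def by (simp add: if_distrib sum.delta cong: if_cong)

lemma dotp_eq_zero_if_vanishing: "(\<And>k. k \<in> {1..d} \<Longrightarrow> \<mu> k = 0) \<Longrightarrow> dotp d \<omega> \<mu> = 0"
  unfolding dotp_def by simp

lemma norm1_cong: "(\<And>k. k \<in> {1..d} \<Longrightarrow> u k = v k) \<Longrightarrow> norm1 d u = norm1 d v"
  unfolding norm1_def by (rule sum.cong) auto

lemma norm1_diff_le: "norm1 d (\<lambda>k. u k - v k) \<le> norm1 d u + norm1 d v"
  unfolding norm1_def sum.distrib[symmetric] by (rule sum_mono) (rule abs_triangle_ineq4)

lemma norm1_scale: "norm1 d (\<lambda>k. c * u k) = \<bar>c\<bar> * norm1 d u"
  unfolding norm1_def by (simp add: abs_mult sum_distrib_left)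

lemma norm1_unit_vec: "j \<in> {1..d} \<Longrightarrow> \<bar>s\<bar> = 1 \<Longrightarrow> norm1 d (unit_vec j s) = 1"
  unfolding norm1_def unit_vec_def by (simp add: if_distrib sum.delta cong: if_cong)

lemma norm1_unit_vec_diff_le:
  assumes "j \<in> {1..d}" "j' \<in> {1..d}" "\<bar>s\<bar> = 1" "\<bar>s'\<bar> = 1"
  shows "norm1 d (\<lambda>k. unit_vec j s k - unit_vec j' s' k) \<le> 2"
  using norm1_diff_le[of d "unit_vec j s" "unit_vec j' s'"] norm1_unit_vec assms by simp

lemma norm1_shift_diff_le:
  assumes "j \<in> {1..d}" "j' \<in> {1..d}" "\<bar>s\<bar> = 1" "\<bar>s'\<bar> = 1"
  shows "norm1 d (\<lambda>k. (\<nu>' k - unit_vec j' s' k) - (\<nu> k - unit_vec j s k))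
           \<le> norm1 d (\<lambda>k. \<nu>' k - \<nu> k) + 2"
proof -
  have "norm1 d (\<lambda>k. (\<nu>' k - unit_vec j' s' k) - (\<nu> k - unit_vec j s k))
      = norm1 d (\<lambda>k. (\<nu>' k - \<nu> k) - (unit_vec j' s' k - unit_vec j s k))"
    by (rule norm1_cong) simp
  also have "\<dots> \<le> norm1 d (\<lambda>k. \<nu>' k - \<nu> k) + norm1 d (\<lambda>k. unit_vec j' s' k - unit_vec j s k)"
    by (rule norm1_diff_le)
  finally show ?thesis using norm1_unit_vec_diff_le[OF assms(2,1,4,3)] by linarith
qed

lemma diophantine_imp_nonresonant:
  assumes dioph: "\<And>\<mu> :: nat \<Rightarrow> int. (\<exists>k\<in>{1..d}. \<mu> k \<noteq> 0) \<Longrightarrow>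
                    \<bar>dotp d \<omega> \<mu>\<bar> > \<gamma>\<^sub>0 * (real_of_int (norm1 d \<mu>)) powr (- \<tau>)"
    and "\<gamma>\<^sub>0 > 0"
  shows "nonresonant d \<omega>"
  unfolding nonresonant_def
proof (intro allI impI ballI)
  fix \<mu> :: "nat \<Rightarrow> int" and k assume "dotp d \<omega> \<mu> = 0" "k \<in> {1..d}"
  show "\<mu> k = 0"
  proof (rule ccontr)
    assume "\<mu> k \<noteq> 0"
    with \<open>k \<in> {1..d}\<close> have "\<gamma>\<^sub>0 * (real_of_int (norm1 d \<mu>)) powr (- \<tau>) < \<bar>dotp d \<omega> \<mu>\<bar>"
      by (intro dioph) blast
    moreover have "\<gamma>\<^sub>0 * (real_of_int (norm1 d \<mu>)) powr (- \<tau>) \<ge> 0" using \<open>\<gamma>\<^sub>0 > 0\<close> by simp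
    ultimately show False using \<open>dotp d \<omega> \<mu> = 0\<close> by simp
  qed
qed

text \<open>A nonzero integer vector of norm at most 2 has one entry \<open>\<plusminus>1\<close> or \<open>\<plusminus>2\<close>, or two entries
  \<open>\<plusminus>1\<close>; so \<open>|\<omega>\<cdot>w|\<close> is at least some \<open>|\<omega>\<^sub>k|\<close> or some \<open>||\<omega>\<^sub>k| - |\<omega>\<^sub>l||\<close>.\<close>

lemma gap_lt_abs_dotp:
  fixes \<omega> :: "nat \<Rightarrow> real" and w :: "nat \<Rightarrow> int"
  assumes g1: "\<And>i. i \<in> {1..d} \<Longrightarrow> \<gamma> < \<bar>\<omega> i\<bar>"
    and g2: "\<And>i i'. 1 \<le> i \<Longrightarrow> i < i' \<Longrightarrow> i' \<le> d \<Longrightarrow> \<gamma> < \<bar>\<bar>\<omega> i\<bar> - \<bar>\<omega> i'\<bar>\<bar>"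
    and nz: "\<exists>k\<in>{1..d}. w k \<noteq> 0" and n2: "norm1 d w \<le> 2"
  shows "\<gamma> < \<bar>dotp d \<omega> w\<bar>"
proof -
  define S where "S = {k\<in>{1..d}. w k \<noteq> 0}"
  have dS: "dotp d \<omega> w = (\<Sum>k\<in>S. \<omega> k * of_int (w k))"
    unfolding dotp_def by (rule sum.mono_neutral_left[symmetric]) (auto simp: S_def)
  have nS: "norm1 d w = (\<Sum>k\<in>S. \<bar>w k\<bar>)"
    unfolding norm1_def by (rule sum.mono_neutral_left[symmetric]) (auto simp: S_def)
  have "int (card S) = (\<Sum>k\<in>S. 1)" by simp
  also have "\<dots> \<le> (\<Sum>k\<in>S. \<bar>w k\<bar>)" by (rule sum_mono) (auto simp: S_def)
  finally have "card S \<le> norm1 d w" using nS by simp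
  with n2 have "card S \<le> 2" by linarith
  moreover have "card S \<noteq> 0" using nz by (auto simp: S_def)
  ultimately consider "card S = 1" | "card S = 2" by linarith
  then show ?thesis
  proof cases
    case 1
    then obtain k where S: "S = {k}" by (auto simp: card_Suc_eq)
    hence k: "k \<in> {1..d}" "w k \<noteq> 0" by (auto simp: S_def)
    hence "\<bar>\<omega> k\<bar> \<le> \<bar>\<omega> k\<bar> * \<bar>real_of_int (w k)\<bar>"
      by (intro mult_le_cancel_left1[THEN iffD2]) auto
    thus ?thesis using g1[OF k(1)] dS S by (simp add: abs_mult)
  next
    case 2
    then obtain k l where S: "S = {k, l}" and "k \<noteq> l"
      by (auto simp: card_Suc_eq numeral_2_eq_2)
    hence k: "k \<in> {1..d}" "w k \<noteq> 0" and l: "l \<in> {1..d}" "w l \<noteq> 0" by (auto simp: S_def)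
    have "\<bar>w k\<bar> + \<bar>w l\<bar> \<le> 2" using nS n2 S \<open>k \<noteq> l\<close> by simp
    hence "\<bar>w k\<bar> = 1" "\<bar>w l\<bar> = 1" using k l by linarith+
    hence "\<bar>real_of_int (w k)\<bar> = 1" "\<bar>real_of_int (w l)\<bar> = 1"
      by (metis of_int_abs of_int_1)+
    hence "\<bar>\<bar>\<omega> k\<bar> - \<bar>\<omega> l\<bar>\<bar> \<le> \<bar>dotp d \<omega> w\<bar>"
      using dS S \<open>k \<noteq> l\<close> abs_triangle_ineq3[of "\<omega> k * of_int (w k)" "- \<omega> l * of_int (w l)"]
      by (simp add: abs_mult)
    moreover have "\<gamma> < \<bar>\<bar>\<omega> k\<bar> - \<bar>\<omega> l\<bar>\<bar>"
      using g2[of k l] g2[of l k] k l \<open>k \<noteq> l\<close> by (cases "k < l") (auto simp: abs_minus_commute)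
    ultimately show ?thesis by linarith
  qed
qed

definition nearest_sign :: "(nat \<Rightarrow> real) \<Rightarrow> nat \<Rightarrow> real \<Rightarrow> int" where
  "nearest_sign \<omega> j x = (if \<bar>x - \<omega> j\<bar> \<le> \<bar>x + \<omega> j\<bar> then 1 else -1)"

lemma abs_nearest_sign: "\<bar>nearest_sign \<omega> j x\<bar> = 1"
  unfolding nearest_sign_def by simp

lemma delta_eq_nearest_sign: "delta \<omega> j x = \<bar>x - \<omega> j * of_int (nearest_sign \<omega> j x)\<bar>"
  unfolding delta_def nearest_sign_def by simp

text \<open>The sign of \<open>\<omega>\<cdot>w\<close> cannot flip between two nearby vectors: a flip forces \<open>w' = -w\<close>
  by nonresonance, and then \<open>w\<close> is so short that \<open>|\<omega>\<cdot>w| > \<gamma>\<close>.\<close>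

lemma dotp_eq_if_abs_eq:
  fixes w w' :: "nat \<Rightarrow> int"
  assumes nonres: "nonresonant d \<omega>"
    and g1: "\<And>i. i \<in> {1..d} \<Longrightarrow> \<gamma> < \<bar>\<omega> i\<bar>"
    and g2: "\<And>i i'. 1 \<le> i \<Longrightarrow> i < i' \<Longrightarrow> i' \<le> d \<Longrightarrow> \<gamma> < \<bar>\<bar>\<omega> i\<bar> - \<bar>\<omega> i'\<bar>\<bar>"
    and small: "\<bar>dotp d \<omega> w\<bar> \<le> \<gamma>"
    and abs_eq: "\<bar>dotp d \<omega> w'\<bar> = \<bar>dotp d \<omega> w\<bar>"
    and close: "norm1 d (\<lambda>k. w' k - w k) \<le> 4"
  shows "dotp d \<omega> w' = dotp d \<omega> w"
proof (rule ccontr)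
  assume "dotp d \<omega> w' \<noteq> dotp d \<omega> w"
  with abs_eq have flip: "dotp d \<omega> (\<lambda>k. w' k + w k) = 0" and "dotp d \<omega> w \<noteq> 0"
    by (auto simp: dotp_add abs_if split: if_splits)
  have opposite: "w' k = - w k" if "k \<in> {1..d}" for k
    using nonres flip that unfolding nonresonant_def by fastforce
  have "norm1 d (\<lambda>k. w' k - w k) = norm1 d (\<lambda>k. (- 2) * w k)"
    by (rule norm1_cong) (simp add: opposite)
  also have "\<dots> = 2 * norm1 d w" using norm1_scale[of d "-2" w] by simp
  finally have "norm1 d w \<le> 2" using close by simp
  moreover have "\<exists>k\<in>{1..d}. w k \<noteq> 0"
    using \<open>dotp d \<omega> w \<noteq> 0\<close> dotp_eq_zero_if_vanishing by blast
  ultimately have "\<gamma> < \<bar>dotp d \<omega> w\<bar>" using gap_lt_abs_dotp[where \<omega>=\<omega> and d=d, OF g1 g2] by blast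
  with small show False by simp
qed

lemma dotp_eq_along_chain:
  fixes w :: "nat \<Rightarrow> nat \<Rightarrow> int"
  assumes nonres: "nonresonant d \<omega>"
    and g1: "\<And>i. i \<in> {1..d} \<Longrightarrow> \<gamma> < \<bar>\<omega> i\<bar>"
    and g2: "\<And>i i'. 1 \<le> i \<Longrightarrow> i < i' \<Longrightarrow> i' \<le> d \<Longrightarrow> \<gamma> < \<bar>\<bar>\<omega> i\<bar> - \<bar>\<omega> i'\<bar>\<bar>"
    and "\<delta> \<le> \<gamma>"
    and abs_dotp: "\<And>i. i \<in> {1..p} \<Longrightarrow> \<bar>dotp d \<omega> (w i)\<bar> = \<delta>"
    and close: "\<And>i. i \<in> {1..<p} \<Longrightarrow> norm1 d (\<lambda>k. w (Suc i) k - w i k) \<le> 4"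
    and "1 \<le> i" "i \<le> p"
  shows "dotp d \<omega> (w i) = dotp d \<omega> (w 1)"
  using \<open>1 \<le> i\<close> \<open>i \<le> p\<close>
proof (induction i rule: dec_induct)
  case (step i)
  have i: "i \<in> {1..p}" "Suc i \<in> {1..p}" "i \<in> {1..<p}" using step by auto
  have "dotp d \<omega> (w (Suc i)) = dotp d \<omega> (w i)"
    using abs_dotp[OF i(1)] abs_dotp[OF i(2)] close[OF i(3)] \<open>\<delta> \<le> \<gamma>\<close>
    by (intro dotp_eq_if_abs_eq[where d=d and \<omega>=\<omega>, OF nonres g1 g2]) simp_all
  with step show ?case by simp
qed simp

theorem lemma3p4:
  fixes d p :: nat and \<omega> :: "nat \<Rightarrow> real" and \<gamma>\<^sub>0 \<tau> \<gamma> :: real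
    and \<nu> :: "nat \<Rightarrow> nat \<Rightarrow> int" and j :: "nat \<Rightarrow> nat"
  assumes dioph: "\<And>\<mu> :: nat \<Rightarrow> int. (\<exists>k\<in>{1..d}. \<mu> k \<noteq> 0) \<Longrightarrow>
                    \<bar>dotp d \<omega> \<mu>\<bar> > \<gamma>\<^sub>0 * (real_of_int (norm1 d \<mu>)) powr (- \<tau>)"
    and g0: "\<gamma>\<^sub>0 > 0" and tau: "\<tau> > real d - 1"
    and gpos: "0 < \<gamma>"
    and g1: "\<And>i. i \<in> {1..d} \<Longrightarrow> \<gamma> < \<bar>\<omega> i\<bar>"
    and g2: "\<And>i i'. 1 \<le> i \<Longrightarrow> i < i' \<Longrightarrow> i' \<le> d \<Longrightarrow> \<gamma> < \<bar>\<bar>\<omega> i\<bar> - \<bar>\<omega> i'\<bar>\<bar>"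
    and p2: "p \<ge> 2"
    and jr: "\<And>i. i \<in> {1..p} \<Longrightarrow> j i \<in> {1..d}"
    and steps: "\<And>i. i \<in> {2..p} \<Longrightarrow> norm1 d (\<lambda>k. \<nu> i k - \<nu> (i - 1) k) \<le> 2"
    and deq: "\<And>i. i \<in> {2..p} \<Longrightarrow>
               delta \<omega> (j i) (dotp d \<omega> (\<nu> i)) = delta \<omega> (j 1) (dotp d \<omega> (\<nu> 1))"
    and dle: "delta \<omega> (j 1) (dotp d \<omega> (\<nu> 1)) \<le> \<gamma>"
  shows "norm1 d (\<lambda>k. \<nu> 1 k - \<nu> p k) \<le> 2"
proof -
  define \<delta> where "\<delta> = delta \<omega> (j 1) (dotp d \<omega> (\<nu> 1))"
  have nonres: "nonresonant d \<omega>" using diophantine_imp_nonresonant[OF dioph g0] .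
  define s where "s i = nearest_sign \<omega> (j i) (dotp d \<omega> (\<nu> i))" for i
  have abs_s: "\<bar>s i\<bar> = 1" for i unfolding s_def by (rule abs_nearest_sign)
  define w where "w i = (\<lambda>k. \<nu> i k - unit_vec (j i) (s i) k)" for i
  have abs_dotp_w: "\<bar>dotp d \<omega> (w i)\<bar> = \<delta>" if "i \<in> {1..p}" for i
    using deq[of i] that delta_eq_nearest_sign dotp_unit_vec[OF jr[OF that]]
    unfolding \<delta>_def w_def s_def dotp_diff by (cases "i = 1") auto
  have w_close: "norm1 d (\<lambda>k. w (Suc i) k - w i k) \<le> 4" if "i \<in> {1..<p}" for i
  proof -
    have i: "i \<in> {1..p}" "Suc i \<in> {1..p}" "Suc i \<in> {2..p}" using that by auto
    show ?thesis
      using norm1_shift_diff_le[OF jr[OF i(1)] jr[OF i(2)] abs_s[of i] abs_s[of "Suc i"],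
          where \<nu>="\<nu> i" and \<nu>'="\<nu> (Suc i)"] steps[OF i(3)] unfolding w_def by simp
  qed
  have "dotp d \<omega> (w p) = dotp d \<omega> (w 1)"
    by (rule dotp_eq_along_chain[where d=d and \<omega>=\<omega> and w=w and p=p,
          OF nonres g1 g2 _ abs_dotp_w w_close]) (use dle p2 in \<open>simp_all add: \<delta>_def\<close>)
  hence "dotp d \<omega> (\<lambda>k. w 1 k - w p k) = 0" by (simp add: dotp_diff)
  hence "w 1 k - w p k = 0" if "k \<in> {1..d}" for k
    using nonres that unfolding nonresonant_def by blast
  hence "\<nu> 1 k - \<nu> p k = unit_vec (j 1) (s 1) k - unit_vec (j p) (s p) k" if "k \<in> {1..d}" for k
    using that unfolding w_def by (simp add: algebra_simps)
  hence "norm1 d (\<lambda>k. \<nu> 1 k - \<nu> p k) = norm1 d (\<lambda>k. unit_vec (j 1) (s 1) k - unit_vec (j p) (s p) k)"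
    by (rule norm1_cong)
  also have "\<dots> \<le> 2" using p2 by (intro norm1_unit_vec_diff_le jr abs_s) auto
  finally show ?thesis .
qed

end
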